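(* Let $S$ be a solid and let $P=\{x\in S: e(x)=0\}$ be the set of precise elements. Then $P$, with the restrictions of $+$, $\cdot$ and $\le$, is an ordered field with zero $0$ and unit $1$.
   Context: A solid is a set $S$ with two binary operations $+$ and $\cdot$ (written $xy$) and a binary relation $\le$ satisfying the following axioms (all variables range over $S$). (A1) $+$ is associative and commutative. (A2) For each $x$ there is $e$ with $x+e=x$ such that $e+f=e$ for every $f$ with $x+f=x$; this $e$ is unique and is denoted $e(x)$ (the magnitude of $x$). An element $x$ with $x=e(x)$ is called a magnitude. (A3) For each $x$ there is $s$ with $x+s=e(x)$ and $e(s)=e(x)$; it is unique and denoted $-x$; write $x-y$ for $x+(-y)$. (A4) $e(x+y)=e(x)$ or $e(x+y)=e(y)$. (M1) $\cdot$ is associative and commutative. (M2) For each $x\neq e(x)$ there is $u$ with $xu=x$ such that $uv=u$ for every $v$ with $xv=x$; it is unique and denoted $u(x)$. (M3) For each $x\ne e(x)$ there is $d$ with $xd=u(x)$ and $u(d)=u(x)$; it is unique and denoted $x^{-1}$; write $y/x$ for $yx^{-1}$. (M4) If $x\neq e(x)$ and $y\ne e(y)$ then $u(xy)=u(x)$ or $u(xy)=u(y)$. (O1) $\le$ is a total order (reflexive, antisymmetric, transitive, total); $x<y$ means $x\le y$ and $x\ne y$. (O2) $x\le y\Rightarrow x+z\le y+z$. (O3) $y+e(x)=e(x)\Rightarrow (y\le e(x)$ and $-y\le e(x))$. (O4) $(e(x)<x$ and $y\le z)\Rightarrow xy\le xz$. (O5) $e(y)\le y\le z\Rightarrow e(x)y\le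 e(x)z$. (AM1) For all $x,y$ there is $z$ with $e(x)y=e(z)$. (AM2) $e(xy)=e(x)y+e(y)x$. (AM3) If $x\ne e(x)$ then $e(u(x))=e(x)/x$. (AM4) (distributivity axiom) $xy+xz=x(y+z)+e(x)y+e(x)z$. (AM5) $-(xy)=(-x)y$. (E1) There is $m$ with $m+x=x$ for all $x$; it is unique, called zero and denoted $0$. (E2) There is $u$ with $ux=x$ for all $x$; it is unique, called one and denoted $1$. (E3) There is $M$ with $e(x)+M=M$ for all $x$. (E4) There is $x$ with $e(x)\ne 0$ and $e(x)\ne M$. (E5) For every $x$ there is $a$ with $x=a+e(x)$ and $e(a)=0$. (E6) If $x,y$ are magnitudes with $x<y$, there is $z$ with $z\ne e(z)$ and $x<z<y$. Further notation: $S^*=\{x\in S: x\ne e(x)\}$ (zeroless elements). $x$ is positive if $e(x)\le x$ and negative if $x<e(x)$; $|x|=x$ if $x$ is positive and $|x|=-x$ if $x$ is negative. $x$ is precise if $e(x)=0$. The relative uncertainty $R(x)$ is $e(u(x))$ if $x\ne e(x)$, and $M$ (from (E3)) if $x=e(x)$. *)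

theory Defs
  imports "HOL-Algebra.Ring" "HOL-Algebra.Ring_Divisibility"
begin

text \<open>A solid: the carrier is the whole type 'a; pl is +, ti is multiplication (written xy),
  leq is the order relation.\<close>

definition mag :: "('a \<Rightarrow> 'a \<Rightarrow> 'a) \<Rightarrow> 'a \<Rightarrow> 'a" where
  "mag pl x = (THE e. pl x e = x \<and> (\<forall>f. pl x f = x \<longrightarrow> pl e f = e))"

definition sneg :: "('a \<Rightarrow> 'a \<Rightarrow> 'a) \<Rightarrow> 'a \<Rightarrow> 'a" where
  "sneg pl x = (THE s. pl x s = mag pl x \<and> mag pl s = mag pl x)"

definition sunit :: "('a \<Rightarrow> 'a \<Rightarrow> 'a) \<Rightarrow> ('a \<Rightarrow> 'a \<Rightarrow> 'a) \<Rightarrow> 'a \<Rightarrow> 'a" where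
  "sunit pl ti x = (THE u. ti x u = x \<and> (\<forall>v. ti x v = x \<longrightarrow> ti u v = u))"

definition sinv :: "('a \<Rightarrow> 'a \<Rightarrow> 'a) \<Rightarrow> ('a \<Rightarrow> 'a \<Rightarrow> 'a) \<Rightarrow> 'a \<Rightarrow> 'a" where
  "sinv pl ti x = (THE d. ti x d = sunit pl ti x \<and> sunit pl ti d = sunit pl ti x)"

definition szero :: "('a \<Rightarrow> 'a \<Rightarrow> 'a) \<Rightarrow> 'a" where
  "szero pl = (THE m. \<forall>x. pl m x = x)"

definition sone :: "('a \<Rightarrow> 'a \<Rightarrow> 'a) \<Rightarrow> 'a" where
  "sone ti = (THE u. \<forall>x. ti u x = x)"

definition sbigM :: "('a \<Rightarrow> 'a \<Rightarrow> 'a) \<Rightarrow> 'a" where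
  "sbigM pl = (SOME M. \<forall>x. pl (mag pl x) M = M)"

definition solid :: "('a \<Rightarrow> 'a \<Rightarrow> 'a) \<Rightarrow> ('a \<Rightarrow> 'a \<Rightarrow> 'a) \<Rightarrow> ('a \<Rightarrow> 'a \<Rightarrow> bool) \<Rightarrow> bool" where
  "solid pl ti leq \<longleftrightarrow>
    \<comment> \<open>(A1)\<close>
    (\<forall>x y z. pl (pl x y) z = pl x (pl y z)) \<and> (\<forall>x y. pl x y = pl y x) \<and>
    \<comment> \<open>(A2)\<close>
    (\<forall>x. \<exists>!e. pl x e = x \<and> (\<forall>f. pl x f = x \<longrightarrow> pl e f = e)) \<and>
    \<comment> \<open>(A3)\<close>
    (\<forall>x. \<exists>!s. pl x s = mag pl x \<and> mag pl s = mag pl x) \<and>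
    \<comment> \<open>(A4)\<close>
    (\<forall>x y. mag pl (pl x y) = mag pl x \<or> mag pl (pl x y) = mag pl y) \<and>
    \<comment> \<open>(M1)\<close>
    (\<forall>x y z. ti (ti x y) z = ti x (ti y z)) \<and> (\<forall>x y. ti x y = ti y x) \<and>
    \<comment> \<open>(M2)\<close>
    (\<forall>x. x \<noteq> mag pl x \<longrightarrow> (\<exists>!u. ti x u = x \<and> (\<forall>v. ti x v = x \<longrightarrow> ti u v = u))) \<and>
    \<comment> \<open>(M3)\<close>
    (\<forall>x. x \<noteq> mag pl x \<longrightarrow> (\<exists>!d. ti x d = sunit pl ti x \<and> sunit pl ti d = sunit pl ti x)) \<and>
    \<comment> \<open>(M4)\<close>
    (\<forall>x y. x \<noteq> mag pl x \<and> y \<noteq> mag pl y \<longrightarrow>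
       sunit pl ti (ti x y) = sunit pl ti x \<or> sunit pl ti (ti x y) = sunit pl ti y) \<and>
    \<comment> \<open>(O1)\<close>
    (\<forall>x. leq x x) \<and> (\<forall>x y. leq x y \<and> leq y x \<longrightarrow> x = y) \<and>
    (\<forall>x y z. leq x y \<and> leq y z \<longrightarrow> leq x z) \<and> (\<forall>x y. leq x y \<or> leq y x) \<and>
    \<comment> \<open>(O2)\<close>
    (\<forall>x y z. leq x y \<longrightarrow> leq (pl x z) (pl y z)) \<and>
    \<comment> \<open>(O3)\<close>
    (\<forall>x y. pl y (mag pl x) = mag pl x \<longrightarrow> leq y (mag pl x) \<and> leq (sneg pl y) (mag pl x)) \<and>
    \<comment> \<open>(O4)\<close>
    (\<forall>x y z. (leq (mag pl x) x \<and> mag pl x \<noteq> x) \<and> leq y z \<longrightarrow> leq (ti x y) (ti x z)) \<and>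
    \<comment> \<open>(O5)\<close>
    (\<forall>x y z. leq (mag pl y) y \<and> leq y z \<longrightarrow> leq (ti (mag pl x) y) (ti (mag pl x) z)) \<and>
    \<comment> \<open>(AM1)\<close>
    (\<forall>x y. \<exists>z. ti (mag pl x) y = mag pl z) \<and>
    \<comment> \<open>(AM2)\<close>
    (\<forall>x y. mag pl (ti x y) = pl (ti (mag pl x) y) (ti (mag pl y) x)) \<and>
    \<comment> \<open>(AM3)\<close>
    (\<forall>x. x \<noteq> mag pl x \<longrightarrow> mag pl (sunit pl ti x) = ti (mag pl x) (sinv pl ti x)) \<and>
    \<comment> \<open>(AM4)\<close>
    (\<forall>x y z. pl (ti x y) (ti x z) =
        pl (pl (ti x (pl y z)) (ti (mag pl x) y)) (ti (mag pl x) z)) \<and>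
    \<comment> \<open>(AM5)\<close>
    (\<forall>x y. sneg pl (ti x y) = ti (sneg pl x) y) \<and>
    \<comment> \<open>(E1)\<close>
    (\<exists>m. \<forall>x. pl m x = x) \<and>
    \<comment> \<open>(E2)\<close>
    (\<exists>u. \<forall>x. ti u x = x) \<and>
    \<comment> \<open>(E3)\<close>
    (\<exists>M. \<forall>x. pl (mag pl x) M = M) \<and>
    \<comment> \<open>(E4)\<close>
    (\<exists>x. mag pl x \<noteq> szero pl \<and> mag pl x \<noteq> sbigM pl) \<and>
    \<comment> \<open>(E5)\<close>
    (\<forall>x. \<exists>a. x = pl a (mag pl x) \<and> mag pl a = szero pl) \<and>
    \<comment> \<open>(E6)\<close>
    (\<forall>x y. x = mag pl x \<and> y = mag pl y \<and> leq x y \<and> x \<noteq> y \<longrightarrow>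
       (\<exists>z. z \<noteq> mag pl z \<and> leq x z \<and> x \<noteq> z \<and> leq z y \<and> z \<noteq> y))"

definition ordered_field_on ::
  "'a set \<Rightarrow> ('a \<Rightarrow> 'a \<Rightarrow> 'a) \<Rightarrow> ('a \<Rightarrow> 'a \<Rightarrow> 'a) \<Rightarrow> ('a \<Rightarrow> 'a \<Rightarrow> bool) \<Rightarrow> 'a \<Rightarrow> 'a \<Rightarrow> bool" where
  "ordered_field_on P pl ti leq z u \<longleftrightarrow>
    field \<lparr>carrier = P, mult = ti, one = u, zero = z, add = pl\<rparr> \<and>
    (\<forall>x\<in>P. leq x x) \<and> (\<forall>x\<in>P. \<forall>y\<in>P. leq x y \<and> leq y x \<longrightarrow> x = y) \<and>
    (\<forall>x\<in>P. \<forall>y\<in>P. \<forall>w\<in>P. leq x y \<and> leq y w \<longrightarrow> leq x w) \<and>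
    (\<forall>x\<in>P. \<forall>y\<in>P. leq x y \<or> leq y x) \<and>
    (\<forall>x\<in>P. \<forall>y\<in>P. \<forall>w\<in>P. leq x y \<longrightarrow> leq (pl x w) (pl y w)) \<and>
    (\<forall>x\<in>P. \<forall>y\<in>P. leq z x \<and> leq z y \<longrightarrow> leq z (ti x y))"

end

theory Submission
  imports Defs
begin

text \<open>
  On precise elements the defect terms of (AM2) and (AM4) are multiples of 0, so everything hinges
  on showing that 0 annihilates precise elements and that 1 is precise.  The first follows from
  the monotonicity axioms (O4), (O5) and the fact that e(1) y = 0 for precise y.  For the second
  compare the magnitude a = e(1) with the precise elements: if some precise z lies above a, then
  a \<le> a a \<le> a z = 0 forces a = 0; if all of them lie below a, then 1 = a, so every precise p
  equals 1 p = a p = 0, contradicting the density axiom (E6).  Then (AM5) gives negatives and (M4)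
  excludes zero divisors; for precise p \<noteq> 0 this forces u(p) = 1, and the precise part of the
  inverse p\<inverse> of (M3) is an inverse of p in the field sense.
\<close>

text \<open>
  The axioms of a solid that the argument uses, in the form of the definition of solid.
\<close>
locale solid_structure =
  fixes pl :: "'a \<Rightarrow> 'a \<Rightarrow> 'a" (infixl "\<boxplus>" 65)
    and ti :: "'a \<Rightarrow> 'a \<Rightarrow> 'a" (infixl "\<boxtimes>" 70)
    and leq :: "'a \<Rightarrow> 'a \<Rightarrow> bool" (infix "\<preceq>" 50)
  assumes a_assoc: "x \<boxplus> y \<boxplus> z = x \<boxplus> (y \<boxplus> z)"
    and a_comm: "x \<boxplus> y = y \<boxplus> x"
    and mag_ex1: "\<exists>!e. x \<boxplus> e = x \<and> (\<forall>f. x \<boxplus> f = x \<longrightarrow> e \<boxplus> f = e)"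
    and neg_ex1: "\<exists>!s. x \<boxplus> s = mag (\<boxplus>) x \<and> mag (\<boxplus>) s = mag (\<boxplus>) x"
    and mag_add_cases: "mag (\<boxplus>) (x \<boxplus> y) = mag (\<boxplus>) x \<or> mag (\<boxplus>) (x \<boxplus> y) = mag (\<boxplus>) y"
    and m_assoc: "x \<boxtimes> y \<boxtimes> z = x \<boxtimes> (y \<boxtimes> z)"
    and m_comm: "x \<boxtimes> y = y \<boxtimes> x"
    and unit_ex1: "x \<noteq> mag (\<boxplus>) x \<Longrightarrow>
      \<exists>!u. x \<boxtimes> u = x \<and> (\<forall>v. x \<boxtimes> v = x \<longrightarrow> u \<boxtimes> v = u)"
    and inv_ex1: "x \<noteq> mag (\<boxplus>) x \<Longrightarrow>
      \<exists>!d. x \<boxtimes> d = sunit (\<boxplus>) (\<boxtimes>) x \<and> sunit (\<boxplus>) (\<boxtimes>) d = sunit (\<boxplus>) (\<boxtimes>) x"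
    and unit_mult_cases: "x \<noteq> mag (\<boxplus>) x \<and> y \<noteq> mag (\<boxplus>) y \<Longrightarrow>
      sunit (\<boxplus>) (\<boxtimes>) (x \<boxtimes> y) = sunit (\<boxplus>) (\<boxtimes>) x \<or>
      sunit (\<boxplus>) (\<boxtimes>) (x \<boxtimes> y) = sunit (\<boxplus>) (\<boxtimes>) y"
    and leq_refl: "x \<preceq> x"
    and leq_antisym: "x \<preceq> y \<and> y \<preceq> x \<Longrightarrow> x = y"
    and leq_trans: "x \<preceq> y \<and> y \<preceq> z \<Longrightarrow> x \<preceq> z"
    and leq_total: "x \<preceq> y \<or> y \<preceq> x"
    and add_right_mono: "x \<preceq> y \<Longrightarrow> x \<boxplus> z \<preceq> y \<boxplus> z"
    and leq_mag_if_add_mag: "y \<boxplus> mag (\<boxplus>) x = mag (\<boxplus>) x \<Longrightarrow> y \<preceq> mag (\<boxplus>) x"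
    and mult_left_mono: "(mag (\<boxplus>) x \<preceq> x \<and> mag (\<boxplus>) x \<noteq> x) \<and> y \<preceq> z \<Longrightarrow> x \<boxtimes> y \<preceq> x \<boxtimes> z"
    and mag_mult_left_mono: "mag (\<boxplus>) y \<preceq> y \<and> y \<preceq> z \<Longrightarrow>
      mag (\<boxplus>) x \<boxtimes> y \<preceq> mag (\<boxplus>) x \<boxtimes> z"
    and mag_mult_ex_mag: "\<exists>z. mag (\<boxplus>) x \<boxtimes> y = mag (\<boxplus>) z"
    and mag_mult: "mag (\<boxplus>) (x \<boxtimes> y) = mag (\<boxplus>) x \<boxtimes> y \<boxplus> mag (\<boxplus>) y \<boxtimes> x"
    and mag_unit: "x \<noteq> mag (\<boxplus>) x \<Longrightarrow>
      mag (\<boxplus>) (sunit (\<boxplus>) (\<boxtimes>) x) = mag (\<boxplus>) x \<boxtimes> sinv (\<boxplus>) (\<boxtimes>) x"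
    and distrib_defect: "x \<boxtimes> y \<boxplus> x \<boxtimes> z =
      x \<boxtimes> (y \<boxplus> z) \<boxplus> mag (\<boxplus>) x \<boxtimes> y \<boxplus> mag (\<boxplus>) x \<boxtimes> z"
    and neg_mult: "sneg (\<boxplus>) (x \<boxtimes> y) = sneg (\<boxplus>) x \<boxtimes> y"
    and ex_add_neutral: "\<exists>m. \<forall>x. m \<boxplus> x = x"
    and ex_mult_neutral: "\<exists>u. \<forall>x. u \<boxtimes> x = x"
    and ex_mag_nonzero: "\<exists>x. mag (\<boxplus>) x \<noteq> szero (\<boxplus>)"
    and precise_part: "\<exists>a. x = a \<boxplus> mag (\<boxplus>) x \<and> mag (\<boxplus>) a = szero (\<boxplus>)"
    and mag_dense: "x = mag (\<boxplus>) x \<and> y = mag (\<boxplus>) y \<and> x \<preceq> y \<and> x \<noteq> y \<Longrightarrow>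
      \<exists>z. z \<noteq> mag (\<boxplus>) z \<and> x \<preceq> z \<and> x \<noteq> z \<and> z \<preceq> y \<and> z \<noteq> y"

lemma solid_structureI:
  assumes "solid pl ti leq"
  shows "solid_structure pl ti leq"
  using assms unfolding solid_def solid_structure_def
  by (elim conjE) (intro conjI; (assumption | meson))

context solid_structure
begin

abbreviation e :: "'a \<Rightarrow> 'a" where "e \<equiv> mag (\<boxplus>)"
abbreviation neg :: "'a \<Rightarrow> 'a" ("\<ominus>_" [81] 80) where "\<ominus>x \<equiv> sneg (\<boxplus>) x"
abbreviation zero_s :: "'a" ("\<zero>\<^sub>S") where "\<zero>\<^sub>S \<equiv> szero (\<boxplus>)"
abbreviation one_s :: "'a" ("\<one>\<^sub>S") where "\<one>\<^sub>S \<equiv> sone (\<boxtimes>)"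
abbreviation u :: "'a \<Rightarrow> 'a" where "u \<equiv> sunit (\<boxplus>) (\<boxtimes>)"

lemma add_mag: "x \<boxplus> e x = x"
  using theI'[OF mag_ex1] unfolding mag_def by blast

lemma mag_add_absorb: "x \<boxplus> f = x \<Longrightarrow> e x \<boxplus> f = e x"
  using theI'[OF mag_ex1] unfolding mag_def by blast

lemma mag_eqI: "m \<boxplus> m = m \<Longrightarrow> e m = m"
  unfolding mag_def by (rule the1_equality[OF mag_ex1]) blast

lemma mag_mag: "e (e x) = e x"
  using mag_eqI mag_add_absorb[OF add_mag] by blast

lemma mag_add_self: "e x \<boxplus> e x = e x"
  using mag_add_absorb[OF add_mag] .

lemma zero_add: "\<zero>\<^sub>S \<boxplus> x = x"
proof -
  obtain m where m: "\<forall>x. m \<boxplus> x = x" using ex_add_neutral by blast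
  have "\<zero>\<^sub>S = m"
    unfolding szero_def by (rule the_equality, fact m, metis m a_comm)
  then show ?thesis using m by simp
qed

lemma add_zero: "x \<boxplus> \<zero>\<^sub>S = x"
  using zero_add a_comm by metis

lemma mag_zero: "e \<zero>\<^sub>S = \<zero>\<^sub>S"
  using mag_eqI zero_add by metis

lemma one_mult: "\<one>\<^sub>S \<boxtimes> x = x"
proof -
  obtain v where v: "\<forall>x. v \<boxtimes> x = x" using ex_mult_neutral by blast
  have "\<one>\<^sub>S = v"
    unfolding sone_def by (rule the_equality, fact v, metis v m_comm)
  then show ?thesis using v by simp
qed

lemma mult_one: "x \<boxtimes> \<one>\<^sub>S = x"
  using one_mult m_comm by metis

lemma add_neg: "x \<boxplus> \<ominus>x = e x"
  using theI'[OF neg_ex1] unfolding sneg_def by blast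

lemma mag_neg: "e (\<ominus>x) = e x"
  using theI'[OF neg_ex1] unfolding sneg_def by blast

lemma neg_mag: "e m = m \<Longrightarrow> \<ominus>m = m"
  unfolding sneg_def by (rule the1_equality[OF neg_ex1]) (metis mag_add_self)

lemma zero_leq_mag: "\<zero>\<^sub>S \<preceq> e x"
  using leq_mag_if_add_mag zero_add by blast

lemma mag_mult_mag: "e (e x \<boxtimes> y) = e x \<boxtimes> y"
  using mag_mult_ex_mag mag_mag by metis

lemma zero_leq_mag_mult: "\<zero>\<^sub>S \<preceq> e x \<boxtimes> y"
  using mag_mult_mag zero_leq_mag by metis

lemma mag_add_eq_zero:
  assumes "e m = m" "e n = n" "m \<boxplus> n = \<zero>\<^sub>S"
  shows "n = \<zero>\<^sub>S"
proof -
  have "n \<boxplus> (m \<boxplus> n) = m \<boxplus> n"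
    by (metis a_assoc a_comm mag_add_self assms(2))
  then show ?thesis using assms(3) add_zero by metis
qed

lemma mag_add_precise:
  assumes "e q = \<zero>\<^sub>S" "e m = m"
  shows "e (q \<boxplus> m) = m"
proof -
  have "q \<boxplus> m \<boxplus> m = q \<boxplus> m" by (metis a_assoc mag_add_self assms(2))
  then have "e (q \<boxplus> m) \<boxplus> m = e (q \<boxplus> m)" by (rule mag_add_absorb)
  then show ?thesis using mag_add_cases[of q m] assms zero_add by metis
qed

lemma precise_add: "e x = \<zero>\<^sub>S \<Longrightarrow> e y = \<zero>\<^sub>S \<Longrightarrow> e (x \<boxplus> y) = \<zero>\<^sub>S"
  using mag_add_cases by metis

lemma mag_one_mult_zero: "e \<one>\<^sub>S \<boxtimes> \<zero>\<^sub>S = \<zero>\<^sub>S"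
  using mag_mult[of "\<one>\<^sub>S" "\<zero>\<^sub>S"] one_mult mult_one mag_zero add_zero by metis

lemma zero_mult_zero: "\<zero>\<^sub>S \<boxtimes> \<zero>\<^sub>S = \<zero>\<^sub>S"
proof (rule leq_antisym[OF conjI])
  have "e \<zero>\<^sub>S \<boxtimes> \<zero>\<^sub>S \<preceq> e \<zero>\<^sub>S \<boxtimes> e \<one>\<^sub>S"
    using mag_mult_left_mono mag_zero leq_refl zero_leq_mag by metis
  then show "\<zero>\<^sub>S \<boxtimes> \<zero>\<^sub>S \<preceq> \<zero>\<^sub>S" using mag_zero mag_one_mult_zero m_comm by metis
  show "\<zero>\<^sub>S \<preceq> \<zero>\<^sub>S \<boxtimes> \<zero>\<^sub>S" using zero_leq_mag_mult mag_zero by metis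
qed

lemma add_mag_one_mult: "y \<boxplus> e \<one>\<^sub>S \<boxtimes> y = y"
  using distrib_defect[of "\<one>\<^sub>S" y "\<zero>\<^sub>S"] one_mult add_zero mag_one_mult_zero by metis

lemma mag_one_mult_precise: "e y = \<zero>\<^sub>S \<Longrightarrow> e \<one>\<^sub>S \<boxtimes> y = \<zero>\<^sub>S"
  using mag_add_absorb[OF add_mag_one_mult] zero_add by metis

lemma mult_zero_nonneg_precise:
  assumes "e y = \<zero>\<^sub>S" "\<zero>\<^sub>S \<preceq> y"
  shows "y \<boxtimes> \<zero>\<^sub>S = \<zero>\<^sub>S"
proof (cases "y = \<zero>\<^sub>S")
  case True
  then show ?thesis using zero_mult_zero by simp
next
  case False
  have "y \<boxtimes> \<zero>\<^sub>S \<preceq> y \<boxtimes> e \<one>\<^sub>S"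
    using mult_left_mono assms False zero_leq_mag by metis
  then have "y \<boxtimes> \<zero>\<^sub>S \<preceq> \<zero>\<^sub>S" using mag_one_mult_precise[OF assms(1)] m_comm by metis
  moreover have "\<zero>\<^sub>S \<preceq> y \<boxtimes> \<zero>\<^sub>S" using zero_leq_mag_mult mag_zero m_comm by metis
  ultimately show ?thesis using leq_antisym by blast
qed

lemma zero_mult_precise:
  assumes "e y = \<zero>\<^sub>S"
  shows "\<zero>\<^sub>S \<boxtimes> y = \<zero>\<^sub>S"
proof (cases "\<zero>\<^sub>S \<preceq> y")
  case True
  then show ?thesis using mult_zero_nonneg_precise assms m_comm by metis
next
  case False
  then have "y \<boxplus> \<ominus>y \<preceq> \<zero>\<^sub>S \<boxplus> \<ominus>y" using leq_total add_right_mono by blast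
  then have "\<zero>\<^sub>S \<preceq> \<ominus>y" using add_neg assms zero_add by metis
  then have "\<ominus>(y \<boxtimes> \<zero>\<^sub>S) = \<zero>\<^sub>S"
    using mult_zero_nonneg_precise mag_neg assms neg_mult by metis
  moreover have "e (y \<boxtimes> \<zero>\<^sub>S) = y \<boxtimes> \<zero>\<^sub>S" using mag_mult_mag mag_zero m_comm by metis
  ultimately show ?thesis using neg_mag m_comm by metis
qed

lemma ex_precise_nonzero: "\<exists>p. e p = \<zero>\<^sub>S \<and> p \<noteq> \<zero>\<^sub>S"
proof -
  obtain x where "e x \<noteq> \<zero>\<^sub>S" using ex_mag_nonzero by blast
  then obtain z where z: "z \<noteq> e z"
    using mag_dense[of "\<zero>\<^sub>S" "e x"] mag_zero mag_mag zero_leq_mag by metis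
  obtain p where "z = p \<boxplus> e z" "e p = \<zero>\<^sub>S" using precise_part by blast
  then show ?thesis using z zero_add by metis
qed

lemma mag_one_leq_square: "e \<one>\<^sub>S \<preceq> e \<one>\<^sub>S \<boxtimes> e \<one>\<^sub>S"
proof -
  let ?a = "e \<one>\<^sub>S"
  obtain b where b: "\<one>\<^sub>S = b \<boxplus> ?a" "e b = \<zero>\<^sub>S" using precise_part by blast
  have "?a \<boxtimes> b \<boxplus> ?a \<boxtimes> ?a = ?a \<boxtimes> (b \<boxplus> ?a) \<boxplus> e ?a \<boxtimes> b \<boxplus> e ?a \<boxtimes> ?a"
    by (rule distrib_defect)
  then have "?a \<boxplus> ?a \<boxtimes> ?a = ?a \<boxtimes> ?a"
    using b mag_mag mag_one_mult_precise[OF b(2)] mult_one zero_add add_zero by metis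
  then show ?thesis using leq_mag_if_add_mag mag_mult_mag by metis
qed

lemma mag_one_eq_zero_if_leq_precise:
  assumes "e z = \<zero>\<^sub>S" "e \<one>\<^sub>S \<preceq> z"
  shows "e \<one>\<^sub>S = \<zero>\<^sub>S"
proof -
  have "e \<one>\<^sub>S \<boxtimes> e \<one>\<^sub>S \<preceq> e \<one>\<^sub>S \<boxtimes> z"
    using mag_mult_left_mono mag_mag leq_refl assms(2) by metis
  then have "e \<one>\<^sub>S \<preceq> \<zero>\<^sub>S"
    using mag_one_leq_square leq_trans mag_one_mult_precise[OF assms(1)] by metis
  then show ?thesis using zero_leq_mag leq_antisym by blast
qed

lemma one_eq_mag_one_if_precise_leq:
  assumes "\<And>z. e z = \<zero>\<^sub>S \<Longrightarrow> z \<preceq> e \<one>\<^sub>S"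
  shows "\<one>\<^sub>S = e \<one>\<^sub>S"
proof -
  let ?a = "e \<one>\<^sub>S"
  obtain b where b: "\<one>\<^sub>S = b \<boxplus> ?a" "e b = \<zero>\<^sub>S" using precise_part by blast
  have one_add_a: "?a \<boxplus> \<one>\<^sub>S = \<one>\<^sub>S" using b a_assoc a_comm mag_add_self by metis
  have "\<one>\<^sub>S \<preceq> ?a"
  proof -
    have "b \<boxplus> ?a \<preceq> ?a \<boxplus> ?a" using add_right_mono assms b(2) by blast
    then show ?thesis using b(1) mag_add_self by metis
  qed
  moreover have "?a \<preceq> \<one>\<^sub>S"
  proof -
    have "\<ominus>b \<boxplus> \<one>\<^sub>S \<preceq> ?a \<boxplus> \<one>\<^sub>S" using add_right_mono assms mag_neg b(2) by metis
    then show ?thesis using one_add_a b add_neg a_assoc a_comm zero_add by metis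
  qed
  ultimately show ?thesis using leq_antisym by blast
qed

lemma mag_one: "e \<one>\<^sub>S = \<zero>\<^sub>S"
proof (cases "\<exists>z. e z = \<zero>\<^sub>S \<and> e \<one>\<^sub>S \<preceq> z")
  case True
  then show ?thesis using mag_one_eq_zero_if_leq_precise by blast
next
  case False
  then have "\<one>\<^sub>S = e \<one>\<^sub>S" using one_eq_mag_one_if_precise_leq leq_total by blast
  moreover obtain p where "e p = \<zero>\<^sub>S" "p \<noteq> \<zero>\<^sub>S" using ex_precise_nonzero by blast
  ultimately show ?thesis using one_mult mag_one_mult_precise by metis
qed

lemma precise_mult: "e x = \<zero>\<^sub>S \<Longrightarrow> e y = \<zero>\<^sub>S \<Longrightarrow> e (x \<boxtimes> y) = \<zero>\<^sub>S"
  using mag_mult[of x y] zero_mult_precise add_zero by metis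

lemma precise_distrib:
  "e x = \<zero>\<^sub>S \<Longrightarrow> e y = \<zero>\<^sub>S \<Longrightarrow> e z = \<zero>\<^sub>S \<Longrightarrow> x \<boxtimes> (y \<boxplus> z) = x \<boxtimes> y \<boxplus> x \<boxtimes> z"
  using distrib_defect[of x y z] zero_mult_precise add_zero by metis

text \<open>(M2) only covers zeroless elements, but the description defining u still has the
  unique solution 0 at 0.\<close>
lemma unit_zero: "u \<zero>\<^sub>S = \<zero>\<^sub>S"
  unfolding sunit_def
proof (rule the_equality)
  show "\<zero>\<^sub>S \<boxtimes> \<zero>\<^sub>S = \<zero>\<^sub>S \<and> (\<forall>v. \<zero>\<^sub>S \<boxtimes> v = \<zero>\<^sub>S \<longrightarrow> \<zero>\<^sub>S \<boxtimes> v = \<zero>\<^sub>S)"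
    using zero_mult_zero by blast
next
  fix w assume "\<zero>\<^sub>S \<boxtimes> w = \<zero>\<^sub>S \<and> (\<forall>v. \<zero>\<^sub>S \<boxtimes> v = \<zero>\<^sub>S \<longrightarrow> w \<boxtimes> v = w)"
  then show "w = \<zero>\<^sub>S" using zero_mult_zero m_comm by metis
qed

lemma mult_unit: "x \<noteq> e x \<Longrightarrow> x \<boxtimes> u x = x"
  using theI'[OF unit_ex1] unfolding sunit_def by blast

lemma precise_no_zero_divisors:
  assumes "e p = \<zero>\<^sub>S" "e q = \<zero>\<^sub>S" "p \<noteq> \<zero>\<^sub>S" "q \<noteq> \<zero>\<^sub>S"
  shows "p \<boxtimes> q \<noteq> \<zero>\<^sub>S"
proof
  assume "p \<boxtimes> q = \<zero>\<^sub>S"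
  then have "u p = \<zero>\<^sub>S \<or> u q = \<zero>\<^sub>S" using unit_mult_cases assms unit_zero by metis
  then show False using mult_unit[of p] mult_unit[of q] assms zero_mult_precise m_comm by metis
qed

lemma mag_unit_precise:
  assumes "e p = \<zero>\<^sub>S" "p \<noteq> \<zero>\<^sub>S"
  shows "e (u p) = \<zero>\<^sub>S"
proof -
  have p: "p \<noteq> e p" using assms by simp
  let ?d = "sinv (\<boxplus>) (\<boxtimes>) p"
  have eU: "e (u p) = \<zero>\<^sub>S \<boxtimes> ?d" using mag_unit[OF p] assms(1) by simp
  have "e (p \<boxtimes> u p) = e p \<boxtimes> u p \<boxplus> e (u p) \<boxtimes> p" by (rule mag_mult)
  then have "\<zero>\<^sub>S \<boxtimes> u p \<boxplus> e (u p) \<boxtimes> p = \<zero>\<^sub>S" using mult_unit[OF p] assms(1) by simp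
  then have "e (u p) \<boxtimes> p = \<zero>\<^sub>S"
    using mag_add_eq_zero mag_mult_mag mag_zero by metis
  moreover have "e (u p) \<boxtimes> p = e (u p)"
  proof -
    have "e (u p) \<boxtimes> p = p \<boxtimes> \<zero>\<^sub>S \<boxtimes> ?d" using eU m_comm m_assoc by simp
    also have "p \<boxtimes> \<zero>\<^sub>S = \<zero>\<^sub>S" using zero_mult_precise[OF assms(1)] m_comm by simp
    finally show ?thesis using eU by simp
  qed
  ultimately show ?thesis by simp
qed

lemma unit_precise:
  assumes "e p = \<zero>\<^sub>S" "p \<noteq> \<zero>\<^sub>S"
  shows "u p = \<one>\<^sub>S"
proof -
  have p: "p \<noteq> e p" using assms by simp
  have eU: "e (u p) = \<zero>\<^sub>S" using mag_unit_precise[OF assms] .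
  have neg_one: "e (\<ominus>\<one>\<^sub>S) = \<zero>\<^sub>S" using mag_neg mag_one by simp
  have "p \<boxtimes> (u p \<boxplus> \<ominus>\<one>\<^sub>S) = p \<boxtimes> u p \<boxplus> p \<boxtimes> \<ominus>\<one>\<^sub>S"
    using precise_distrib assms(1) eU neg_one by blast
  also have "p \<boxtimes> \<ominus>\<one>\<^sub>S = \<ominus>p" using neg_mult[of "\<one>\<^sub>S" p] one_mult m_comm by metis
  finally have "p \<boxtimes> (u p \<boxplus> \<ominus>\<one>\<^sub>S) = \<zero>\<^sub>S" using mult_unit[OF p] add_neg assms(1) by simp
  then have "u p \<boxplus> \<ominus>\<one>\<^sub>S = \<zero>\<^sub>S"
    using precise_no_zero_divisors assms precise_add[OF eU neg_one] by blast
  then have "u p \<boxplus> \<ominus>\<one>\<^sub>S \<boxplus> \<one>\<^sub>S = \<one>\<^sub>S" using zero_add by simp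
  then show ?thesis using a_assoc a_comm add_neg mag_one add_zero by metis
qed

lemma precise_inverse:
  assumes "e p = \<zero>\<^sub>S" "p \<noteq> \<zero>\<^sub>S"
  shows "\<exists>r. e r = \<zero>\<^sub>S \<and> p \<boxtimes> r = \<one>\<^sub>S"
proof -
  have p: "p \<noteq> e p" using assms by simp
  define d where "d = sinv (\<boxplus>) (\<boxtimes>) p"
  have pd: "p \<boxtimes> d = \<one>\<^sub>S"
    using theI'[OF inv_ex1[OF p]] unit_precise[OF assms] unfolding sinv_def d_def by simp
  obtain r where r: "d = r \<boxplus> e d" "e r = \<zero>\<^sub>S" using precise_part by blast
  have "e (p \<boxtimes> d) = e p \<boxtimes> d \<boxplus> e d \<boxtimes> p" by (rule mag_mult)
  then have "\<zero>\<^sub>S \<boxtimes> d \<boxplus> e d \<boxtimes> p = \<zero>\<^sub>S" using pd mag_one assms(1) by simp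
  then have edp: "e d \<boxtimes> p = \<zero>\<^sub>S" using mag_add_eq_zero mag_mult_mag mag_zero by metis
  have "p \<boxtimes> r \<boxplus> p \<boxtimes> e d = p \<boxtimes> (r \<boxplus> e d) \<boxplus> e p \<boxtimes> r \<boxplus> e p \<boxtimes> e d"
    by (rule distrib_defect)
  then have pr: "p \<boxtimes> r = \<one>\<^sub>S \<boxplus> \<zero>\<^sub>S \<boxtimes> e d"
    using r pd edp m_comm assms(1) zero_mult_precise add_zero by metis
  have "e (\<one>\<^sub>S \<boxplus> \<zero>\<^sub>S \<boxtimes> e d) = \<zero>\<^sub>S \<boxtimes> e d"
    using mag_add_precise mag_one mag_mult_mag mag_zero by metis
  then have "\<zero>\<^sub>S \<boxtimes> e d = \<zero>\<^sub>S" using pr precise_mult assms(1) r(2) by metis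
  then show ?thesis using pr r(2) add_zero by metis
qed

lemma one_neq_zero: "\<one>\<^sub>S \<noteq> \<zero>\<^sub>S"
  using ex_precise_nonzero one_mult zero_mult_precise by metis

lemma precise_mult_nonneg:
  assumes "e x = \<zero>\<^sub>S" "e y = \<zero>\<^sub>S" "\<zero>\<^sub>S \<preceq> x" "\<zero>\<^sub>S \<preceq> y"
  shows "\<zero>\<^sub>S \<preceq> x \<boxtimes> y"
proof (cases "x = \<zero>\<^sub>S")
  case True
  then show ?thesis using zero_mult_precise assms(2) leq_refl by simp
next
  case False
  then have "x \<boxtimes> \<zero>\<^sub>S \<preceq> x \<boxtimes> y" using mult_left_mono assms by metis
  then show ?thesis using zero_mult_precise assms(1) m_comm by metis
qed

abbreviation precise_ring :: "'a ring" where
  "precise_ring \<equiv>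
    \<lparr>carrier = {x. e x = \<zero>\<^sub>S}, mult = (\<boxtimes>), one = \<one>\<^sub>S, zero = \<zero>\<^sub>S, add = (\<boxplus>)\<rparr>"

lemma precise_abelian_group: "abelian_group precise_ring"
proof (rule abelian_groupI)
  fix x assume "x \<in> carrier precise_ring"
  then have "\<ominus>x \<in> carrier precise_ring" "\<ominus>x \<boxplus> x = \<zero>\<^sub>S" using mag_neg add_neg a_comm by simp_all
  then show "\<exists>y\<in>carrier precise_ring. y \<oplus>\<^bsub>precise_ring\<^esub> x = \<zero>\<^bsub>precise_ring\<^esub>" by auto
qed (auto simp: precise_add mag_zero zero_add a_assoc intro: a_comm)

lemma precise_comm_monoid: "comm_monoid precise_ring"
  by (rule comm_monoidI) (auto simp: precise_mult mag_one m_assoc one_mult intro: m_comm)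

lemma precise_field: "field precise_ring"
proof -
  have "cring precise_ring"
  proof (rule cringI[OF precise_abelian_group precise_comm_monoid])
    fix x y z assume "x \<in> carrier precise_ring" "y \<in> carrier precise_ring" "z \<in> carrier precise_ring"
    then have "z \<boxtimes> (x \<boxplus> y) = z \<boxtimes> x \<boxplus> z \<boxtimes> y" using precise_distrib by simp
    then show "(x \<oplus>\<^bsub>precise_ring\<^esub> y) \<otimes>\<^bsub>precise_ring\<^esub> z =
        x \<otimes>\<^bsub>precise_ring\<^esub> z \<oplus>\<^bsub>precise_ring\<^esub> y \<otimes>\<^bsub>precise_ring\<^esub> z"
      using m_comm by simp
  qed
  then show ?thesis
  proof (rule cring.cring_fieldI2)
    show "\<zero>\<^bsub>precise_ring\<^esub> \<noteq> \<one>\<^bsub>precise_ring\<^esub>" using one_neq_zero by simp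
  next
    fix a assume "a \<in> carrier precise_ring" "a \<noteq> \<zero>\<^bsub>precise_ring\<^esub>"
    then show "\<exists>b\<in>carrier precise_ring. a \<otimes>\<^bsub>precise_ring\<^esub> b = \<one>\<^bsub>precise_ring\<^esub>"
      using precise_inverse by auto
  qed
qed

lemma precise_ordered_field:
  "ordered_field_on {x. e x = \<zero>\<^sub>S} (\<boxplus>) (\<boxtimes>) (\<preceq>) \<zero>\<^sub>S \<one>\<^sub>S"
  unfolding ordered_field_on_def
proof (intro conjI precise_field ballI impI)
  show "x \<preceq> x" for x by (rule leq_refl)
  show "x = y" if "x \<preceq> y \<and> y \<preceq> x" for x y using that by (rule leq_antisym)
  show "x \<preceq> w" if "x \<preceq> y \<and> y \<preceq> w" for x y w using that by (rule leq_trans)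
  show "x \<preceq> y \<or> y \<preceq> x" for x y by (rule leq_total)
  show "x \<boxplus> w \<preceq> y \<boxplus> w" if "x \<preceq> y" for x y w using that by (rule add_right_mono)
  show "\<zero>\<^sub>S \<preceq> x \<boxtimes> y"
    if "x \<in> {x. e x = \<zero>\<^sub>S}" "y \<in> {x. e x = \<zero>\<^sub>S}" "\<zero>\<^sub>S \<preceq> x \<and> \<zero>\<^sub>S \<preceq> y" for x y
    using that precise_mult_nonneg by simp
qed

end

theorem mainTheorem16:
  fixes pl ti :: "'a \<Rightarrow> 'a \<Rightarrow> 'a" and leq :: "'a \<Rightarrow> 'a \<Rightarrow> bool"
  assumes "solid pl ti leq"
  shows "ordered_field_on {x. mag pl x = szero pl} pl ti leq (szero pl) (sone ti)"
  using solid_structure.precise_ordered_field[OF solid_structureI[OF assms]] .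

end
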